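(* Let $k$ be a positive integer. (a) For $n \ge 1$, $\dim_{k,f}(P_n+K_1)=\dim_f(P_n+K_1)$, and this common value equals $\frac{n+1}{2}$ if $n \in\{1,2,3\}$; $\frac{5}{3}$ if $n \in \{4,5\}$; $\frac{n+1}{4}$ if $n \ge 6$ and $n\equiv 1$ or $3\pmod 4$; and $\frac{n+2}{4}$ if $n \ge 6$ and $n\equiv 2\pmod4$. (b) If $n\ge 8$ and $n\equiv 0 \pmod4$, then $\frac{n}{4} \le \dim_{k,f}(P_n+K_1)=\dim_f(P_n+K_1)\le \frac{n+2}{4}$.
   Context: $P_n$ is the path on $n$ vertices, $K_1$ a single vertex, and $G+H$ denotes the join (disjoint union plus all edges between the two graphs). $d(x,y)$ is the distance in $G$. For a function $g$ on $V(G)$ and $U\subseteq V(G)$, $g(U)=\sum_{s\in U}g(s)$. $R\{x,y\}=\{z\in V(G): d(x,z)\ne d(y,z)\}$; a function $g:V(G)\to[0,1]$ is a resolving function if $g(R\{x,y\})\ge1$ for all distinct $x,y$, and $\dim_f(G)$ is the minimum of $g(V(G))$ over resolving functions. For a positive integer $k$, $d_k(x,y)=\min\{d(x,y),k+1\}$, $R_k\{x,y\}=\{z: d_k(x,z)\neq d_k(y,z)\}$; $h:V(G)\to[0,1]$ is a $k$-truncated resolving function if $h(R_k\{x,y\})\ge 1$ for all distinct $x,y$, and $\dim_{k,f}(G)$ is the minimum of $h(V(G))$ over such $h$. *)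

theory Defs
  imports Complex_Main
begin

text \<open>A graph is given by a vertex set V and a symmetric adjacency relation E
  (assumed to only relate vertices of V).\<close>

inductive walk :: "('a \<Rightarrow> 'a \<Rightarrow> bool) \<Rightarrow> nat \<Rightarrow> 'a \<Rightarrow> 'a \<Rightarrow> bool"
  for E where
  walk0: "walk E 0 x x"
| walkS: "E x z \<Longrightarrow> walk E n z y \<Longrightarrow> walk E (Suc n) x y"

text \<open>Graph distance: length of a shortest walk (graphs considered are connected).\<close>
definition gdist :: "('a \<Rightarrow> 'a \<Rightarrow> bool) \<Rightarrow> 'a \<Rightarrow> 'a \<Rightarrow> nat" where
  "gdist E x y = (LEAST n. walk E n x y)"

definition tdist :: "nat \<Rightarrow> ('a \<Rightarrow> 'a \<Rightarrow> bool) \<Rightarrow> 'a \<Rightarrow> 'a \<Rightarrow> nat" where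
  "tdist k E x y = min (gdist E x y) (k + 1)"

definition resolving_set :: "'a set \<Rightarrow> ('a \<Rightarrow> 'a \<Rightarrow> bool) \<Rightarrow> 'a \<Rightarrow> 'a \<Rightarrow> 'a set" where
  "resolving_set V E x y = {z \<in> V. gdist E x z \<noteq> gdist E y z}"

definition tresolving_set :: "nat \<Rightarrow> 'a set \<Rightarrow> ('a \<Rightarrow> 'a \<Rightarrow> bool) \<Rightarrow> 'a \<Rightarrow> 'a \<Rightarrow> 'a set" where
  "tresolving_set k V E x y = {z \<in> V. tdist k E x z \<noteq> tdist k E y z}"

definition resolving_function :: "'a set \<Rightarrow> ('a \<Rightarrow> 'a \<Rightarrow> bool) \<Rightarrow> ('a \<Rightarrow> real) \<Rightarrow> bool" where
  "resolving_function V E g \<longleftrightarrow>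
     (\<forall>v\<in>V. 0 \<le> g v \<and> g v \<le> 1) \<and>
     (\<forall>x\<in>V. \<forall>y\<in>V. x \<noteq> y \<longrightarrow> sum g (resolving_set V E x y) \<ge> 1)"

definition tresolving_function :: "nat \<Rightarrow> 'a set \<Rightarrow> ('a \<Rightarrow> 'a \<Rightarrow> bool) \<Rightarrow> ('a \<Rightarrow> real) \<Rightarrow> bool" where
  "tresolving_function k V E h \<longleftrightarrow>
     (\<forall>v\<in>V. 0 \<le> h v \<and> h v \<le> 1) \<and>
     (\<forall>x\<in>V. \<forall>y\<in>V. x \<noteq> y \<longrightarrow> sum h (tresolving_set k V E x y) \<ge> 1)"

definition frac_dim :: "'a set \<Rightarrow> ('a \<Rightarrow> 'a \<Rightarrow> bool) \<Rightarrow> real" where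
  "frac_dim V E = Inf {sum g V | g. resolving_function V E g}"

definition trunc_frac_dim :: "nat \<Rightarrow> 'a set \<Rightarrow> ('a \<Rightarrow> 'a \<Rightarrow> bool) \<Rightarrow> real" where
  "trunc_frac_dim k V E = Inf {sum h V | h. tresolving_function k V E h}"

text \<open>The fan P_n + K_1: path vertices 0,...,n-1 (i adjacent to i+1), plus the
  vertex n joined to all path vertices.\<close>
definition fan_V :: "nat \<Rightarrow> nat set" where
  "fan_V n = {0..n}"

definition fan_E :: "nat \<Rightarrow> nat \<Rightarrow> nat \<Rightarrow> bool" where
  "fan_E n x y \<longleftrightarrow> x \<le> n \<and> y \<le> n \<and> x \<noteq> y \<and>
     (x = n \<or> y = n \<or> x + 1 = y \<or> y + 1 = x)"

end

(* The hub n of the fan is adjacent to every path vertex, so all distances are 0, 1 or 2 and,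
   for k >= 1, truncating distances at k + 1 changes nothing.

   Lower bounds: the path vertices i + 1 and i + 2 are resolved only by i, ..., i + 3, so every
   window of four consecutive path vertices carries weight at least 1 (the three vertices at
   either end of the path as well).  Tiling the path by such windows gives the bounds; for
   n = 1 mod 4 one tiles from both ends and adds the pair 0, n - 1, which is resolved only by
   0, 1, n - 2, n - 1, so that every path vertex is counted exactly twice.

   Upper bounds (n >= 6): weight 1/2 on the even path vertices and on the last path vertex
   n - 1 resolves the fan, since every pair of vertices is distinguished by two of them. *)
theory Submission
  imports Defs
begin

lemma walk_0_imp_eq: "walk E 0 x y \<Longrightarrow> x = y"
  by (erule walk.cases) auto

lemma walk_1_imp_edge: "walk E (Suc 0) x y \<Longrightarrow> E x y"
  by (erule walk.cases) (auto dest: walk_0_imp_eq)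

lemma gdist_dominating_vertex:
  assumes dominating: "\<And>v. v \<in> V \<Longrightarrow> v \<noteq> c \<Longrightarrow> E c v \<and> E v c"
    and "x \<in> V" "y \<in> V"
  shows "gdist E x y = (if x = y then 0 else if E x y then 1 else 2)"
  unfolding gdist_def
proof (rule Least_equality)
  show "walk E (if x = y then 0 else if E x y then 1 else 2) x y"
  proof (cases "x = y \<or> E x y")
    case True
    then show ?thesis by (auto intro: walk.intros)
  next
    case False
    then have "E x c" "E c y"
      using dominating \<open>x \<in> V\<close> \<open>y \<in> V\<close> by metis+
    then have "walk E (Suc (Suc 0)) x y" by (blast intro: walk.intros)
    then show ?thesis using False by (simp add: numeral_2_eq_2)
  qed
next
  fix m assume walk: "walk E m x y"
  have "x = y" if "m = 0" using walk_0_imp_eq[of E x y] walk that by simp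
  moreover have "E x y" if "m = Suc 0" using walk_1_imp_edge[of E x y] walk that by simp
  ultimately show "(if x = y then 0 else if E x y then 1 else 2) \<le> m"
    by (cases m) (auto simp: Suc_le_eq)
qed

lemma tresolving_set_eq_resolving_set:
  assumes "\<And>x y. x \<in> V \<Longrightarrow> y \<in> V \<Longrightarrow> gdist E x y \<le> k + 1"
    and "x \<in> V" "y \<in> V"
  shows "tresolving_set k V E x y = resolving_set V E x y"
  using assms by (auto simp: tresolving_set_def resolving_set_def tdist_def min_absorb1)

lemma trunc_frac_dim_eq_frac_dim:
  assumes "\<And>x y. x \<in> V \<Longrightarrow> y \<in> V \<Longrightarrow> gdist E x y \<le> k + 1"
  shows "trunc_frac_dim k V E = frac_dim V E"
proof -
  have "tresolving_function k V E = resolving_function V E"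
    using tresolving_set_eq_resolving_set[OF assms]
    by (auto simp: fun_eq_iff tresolving_function_def resolving_function_def)
  then show ?thesis by (simp add: trunc_frac_dim_def frac_dim_def)
qed

lemma frac_dim_le:
  assumes "resolving_function V E g"
  shows "frac_dim V E \<le> sum g V"
  unfolding frac_dim_def
proof (rule cInf_lower)
  show "bdd_below {sum h V |h. resolving_function V E h}"
    by (rule bdd_belowI[of _ 0]) (auto simp: resolving_function_def intro: sum_nonneg)
qed (use assms in blast)

lemma le_frac_dim:
  assumes "resolving_function V E g"
    and "\<And>h. resolving_function V E h \<Longrightarrow> c \<le> sum h V"
  shows "c \<le> frac_dim V E"
  unfolding frac_dim_def by (rule cInf_greatest) (use assms in auto)

lemma frac_dim_eqI:
  assumes "resolving_function V E g" "sum g V = c"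
    and "\<And>h. resolving_function V E h \<Longrightarrow> c \<le> sum h V"
  shows "frac_dim V E = c"
  using frac_dim_le[OF assms(1)] le_frac_dim[OF assms(1,3)] assms(2) by linarith

lemma resolving_set_commute: "resolving_set V E x y = resolving_set V E y x"
  by (auto simp: resolving_set_def)

lemma resolving_function_sum_ge_1:
  assumes g: "resolving_function V E g" and "finite V"
    and "x \<in> V" "y \<in> V" "x \<noteq> y" "resolving_set V E x y \<subseteq> S" "S \<subseteq> V"
  shows "1 \<le> sum g S"
proof -
  have "1 \<le> sum g (resolving_set V E x y)"
    using g assms(3-5) by (simp add: resolving_function_def)
  also have "\<dots> \<le> sum g S"
    using g assms(2,6,7) by (intro sum_mono2) (auto simp: resolving_function_def finite_subset)
  finally show ?thesis .
qed

lemma sum_ge_of_windows: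
  fixes f :: "nat \<Rightarrow> real"
  assumes first: "1 \<le> sum f {0..<3}"
    and window: "\<And>i. i + 4 \<le> L \<Longrightarrow> 1 \<le> sum f {i..<i + 4}"
    and "4 * m + 3 \<le> L"
  shows "real m + 1 \<le> sum f {0..<4 * m + 3}"
  using \<open>4 * m + 3 \<le> L\<close>
proof (induction m)
  case 0
  then show ?case using first by simp
next
  case (Suc m)
  have "sum f {0..<4 * Suc m + 3} = sum f {0..<4 * m + 3} + sum f {4 * m + 3..<4 * m + 3 + 4}"
    by (simp add: sum.atLeastLessThan_concat)
  moreover have "1 \<le> sum f {4 * m + 3..<4 * m + 3 + 4}"
    using Suc.prems by (intro window) simp
  ultimately show ?case using Suc by simp
qed

lemma sum_reflect_atLeastLessThan:
  assumes "b \<le> n"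
  shows "(\<Sum>v = a..<b. g (n - Suc v)) = sum g {n - b..<n - a}"
  by (rule sum.reindex_bij_witness[where i="\<lambda>v. n - Suc v" and j="\<lambda>v. n - Suc v"])
    (use assms in auto)

definition fan_dist :: "nat \<Rightarrow> nat \<Rightarrow> nat \<Rightarrow> nat" where
  "fan_dist n x y = (if x = y then 0 else if fan_E n x y then 1 else 2)"

lemma gdist_fan:
  assumes "x \<le> n" "y \<le> n"
  shows "gdist (fan_E n) x y = fan_dist n x y"
  unfolding fan_dist_def
  by (rule gdist_dominating_vertex[where V="{..n}" and c=n]) (use assms in \<open>auto simp: fan_E_def\<close>)

lemma trunc_frac_dim_fan:
  assumes "1 \<le> k"
  shows "trunc_frac_dim k (fan_V n) (fan_E n) = frac_dim (fan_V n) (fan_E n)"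
  by (rule trunc_frac_dim_eq_frac_dim) (use assms in \<open>auto simp: fan_V_def gdist_fan fan_dist_def\<close>)

lemma resolving_set_fan:
  assumes "x \<le> n" "y \<le> n"
  shows "resolving_set (fan_V n) (fan_E n) x y = {z. z \<le> n \<and> fan_dist n x z \<noteq> fan_dist n y z}"
  using assms by (auto simp: resolving_set_def fan_V_def gdist_fan)

lemma resolving_function_fan_iff:
  "resolving_function (fan_V n) (fan_E n) g \<longleftrightarrow>
     (\<forall>v\<in>fan_V n. 0 \<le> g v \<and> g v \<le> 1) \<and>
     (\<forall>x\<in>fan_V n. \<forall>y\<in>fan_V n. x \<noteq> y \<longrightarrow>
        1 \<le> (\<Sum>z\<in>fan_V n. if fan_dist n x z \<noteq> fan_dist n y z then g z else 0))"
proof -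
  have "sum g (resolving_set (fan_V n) (fan_E n) x y) =
      (\<Sum>z\<in>fan_V n. if fan_dist n x z \<noteq> fan_dist n y z then g z else 0)" if "x \<le> n" "y \<le> n" for x y
  proof -
    have "resolving_set (fan_V n) (fan_E n) x y = {z \<in> fan_V n. fan_dist n x z \<noteq> fan_dist n y z}"
      unfolding resolving_set_fan[OF that] by (auto simp: fan_V_def)
    then show ?thesis by (simp only:) (rule sum.inter_filter, simp add: fan_V_def)
  qed
  then show ?thesis by (auto simp: resolving_function_def fan_V_def)
qed

lemma resolving_function_fan_pair:
  assumes "resolving_function (fan_V n) (fan_E n) g" "x \<le> n" "y \<le> n" "x \<noteq> y"
  shows "1 \<le> (\<Sum>z\<in>fan_V n. if fan_dist n x z \<noteq> fan_dist n y z then g z else 0)"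
  using assms(1)[unfolded resolving_function_fan_iff] assms(2-4) by (simp add: fan_V_def)

lemma resolving_function_fan_sum_ge_1:
  assumes "resolving_function (fan_V n) (fan_E n) g" "x \<le> n" "y \<le> n" "x \<noteq> y"
    and "\<And>z. z \<le> n \<Longrightarrow> z \<notin> S \<Longrightarrow> fan_dist n x z = fan_dist n y z" "S \<subseteq> {0..n}"
  shows "1 \<le> sum g S"
proof -
  have "resolving_set (fan_V n) (fan_E n) x y \<subseteq> S"
    using assms(2,3,5) by (auto simp: resolving_set_fan)
  then show ?thesis
    using resolving_function_sum_ge_1[OF assms(1) _ _ _ assms(4)] assms(2,3,6) by (simp add: fan_V_def)
qed

lemma fan_window_weight:
  assumes "resolving_function (fan_V n) (fan_E n) g" "i + 4 \<le> n"
  shows "1 \<le> sum g {i..<i + 4}"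
  by (rule resolving_function_fan_sum_ge_1[OF assms(1), of "i + 1" "i + 2"])
    (use assms(2) in \<open>auto simp: fan_dist_def fan_E_def\<close>)

lemma fan_first_window_weight:
  assumes "resolving_function (fan_V n) (fan_E n) g" "3 \<le> n"
  shows "1 \<le> sum g {0..<3}"
  by (rule resolving_function_fan_sum_ge_1[OF assms(1), of 0 1])
    (use assms(2) in \<open>auto simp: fan_dist_def fan_E_def\<close>)

lemma fan_last_window_weight:
  assumes "resolving_function (fan_V n) (fan_E n) g" "3 \<le> n"
  shows "1 \<le> sum g {n - 3..<n}"
  by (rule resolving_function_fan_sum_ge_1[OF assms(1), of "n - 2" "n - 1"])
    (use assms(2) in \<open>auto simp: fan_dist_def fan_E_def\<close>)

lemma fan_end_vertices_weight:
  assumes "resolving_function (fan_V n) (fan_E n) g" "4 \<le> n"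
  shows "1 \<le> sum g {0, 1, n - 2, n - 1}"
  by (rule resolving_function_fan_sum_ge_1[OF assms(1), of 0 "n - 1"])
    (use assms(2) in \<open>auto simp: fan_dist_def fan_E_def\<close>)

lemma path_weight_le_fan_weight:
  assumes "resolving_function (fan_V n) (fan_E n) g"
  shows "sum g {0..<n} \<le> sum g (fan_V n)"
  using assms by (intro sum_mono2) (auto simp: fan_V_def resolving_function_def)

lemma fan_weight_ge_mod4_eq_3:
  assumes g: "resolving_function (fan_V n) (fan_E n) g" and "n mod 4 = 3"
  shows "(real n + 1) / 4 \<le> sum g (fan_V n)"
proof -
  have "n = 4 * (n div 4) + 3" using \<open>n mod 4 = 3\<close> by presburger
  then obtain m where n: "n = 4 * m + 3" by blast
  have "real m + 1 \<le> sum g {0..<n}"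
    unfolding n using n fan_first_window_weight[OF g] fan_window_weight[OF g]
    by (intro sum_ge_of_windows[where L=n]) auto
  then show ?thesis using path_weight_le_fan_weight[OF g] n by simp
qed

lemma fan_weight_ge_mod4_eq_0:
  assumes g: "resolving_function (fan_V n) (fan_E n) g" and "n mod 4 = 0" "4 \<le> n"
  shows "real n / 4 \<le> sum g (fan_V n)"
proof -
  have "n = 4 * (n div 4 - 1) + 4" using assms(2,3) by presburger
  then obtain m where n: "n = 4 * m + 4" by blast
  have "real m + 1 \<le> sum g {0..<4 * m + 3}"
    using n fan_first_window_weight[OF g] fan_window_weight[OF g]
    by (intro sum_ge_of_windows[where L=n]) auto
  also have "\<dots> \<le> sum g {0..<n}"
    using g n by (intro sum_mono2) (auto simp: fan_V_def resolving_function_def)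
  finally show ?thesis using path_weight_le_fan_weight[OF g] n by simp
qed

lemma fan_weight_ge_mod4_eq_2:
  assumes g: "resolving_function (fan_V n) (fan_E n) g" and "n mod 4 = 2" "6 \<le> n"
  shows "(real n + 2) / 4 \<le> sum g (fan_V n)"
proof -
  have "n = 4 * (n div 4 - 1) + 6" using assms(2,3) by presburger
  then obtain m where n: "n = 4 * m + 6" by blast
  have "real m + 1 \<le> sum g {0..<4 * m + 3}"
    using n fan_first_window_weight[OF g] fan_window_weight[OF g]
    by (intro sum_ge_of_windows[where L=n]) auto
  moreover have "1 \<le> sum g {4 * m + 3..<n}"
    using fan_last_window_weight[OF g] n by (simp add: ac_simps)
  moreover have "sum g {0..<n} = sum g {0..<4 * m + 3} + sum g {4 * m + 3..<n}"
    using n by (simp add: sum.atLeastLessThan_concat)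
  ultimately show ?thesis using path_weight_le_fan_weight[OF g] n by simp
qed

lemma fan_weight_ge_mod4_eq_1:
  assumes g: "resolving_function (fan_V n) (fan_E n) g" and "n mod 4 = 1" "5 \<le> n"
  shows "(real n + 1) / 4 \<le> sum g (fan_V n)"
proof -
  have "n = 4 * (n div 4 - 1) + 5" using assms(2,3) by presburger
  then obtain m where n: "n = 4 * m + 5" by blast
  define f where "f v = g (n - Suc v)" for v
  have reflect: "sum f {a..<b} = sum g {n - b..<n - a}" if "b \<le> n" for a b
    unfolding f_def using that by (rule sum_reflect_atLeastLessThan)
  have "real m + 1 \<le> sum g {0..<4 * m + 3}"
    using n fan_first_window_weight[OF g] fan_window_weight[OF g]
    by (intro sum_ge_of_windows[where L=n]) auto
  moreover have "real m + 1 \<le> sum f {0..<4 * m + 3}"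
  proof (rule sum_ge_of_windows[where L=n])
    show "1 \<le> sum f {0..<3}"
      using fan_last_window_weight[OF g] reflect[of 3 0] n by simp
    show "1 \<le> sum f {i..<i + 4}" if "i + 4 \<le> n" for i
      using fan_window_weight[OF g, of "n - (i + 4)"] reflect[of "i + 4" i] that by simp
  qed (use n in simp)
  moreover have "sum f {0..<4 * m + 3} = sum g {2..<n}"
    using reflect[of "4 * m + 3" 0] n by simp
  moreover have "1 \<le> g 0 + g 1 + g (4 * m + 3) + g (4 * m + 4)"
    using fan_end_vertices_weight[OF g] n by (simp add: ac_simps)
  moreover have "sum g {0..<n} = g 0 + g 1 + sum g {2..<n}"
    using sum.atLeastLessThan_concat[of 0 2 n g] n by (simp add: numeral_2_eq_2)
  moreover have "sum g {0..<n} = sum g {0..<4 * m + 3} + g (4 * m + 3) + g (4 * m + 4)"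
  proof -
    have "{4 * m + 3..<n} = {4 * m + 3, 4 * m + 4}" using n by auto
    then show ?thesis using sum.atLeastLessThan_concat[of 0 "4 * m + 3" n g] n by simp
  qed
  ultimately have "2 * real m + 3 \<le> 2 * sum g {0..<n}" by linarith
  then show ?thesis using path_weight_le_fan_weight[OF g] n by simp
qed

definition fan_landmarks :: "nat \<Rightarrow> nat set" where
  "fan_landmarks n = insert (n - 1) {v. v < n \<and> even v}"

definition fan_landmark_weight :: "nat \<Rightarrow> nat \<Rightarrow> real" where
  "fan_landmark_weight n v = (if v \<in> fan_landmarks n then 1 / 2 else 0)"

lemma finite_resolving_set: "finite V \<Longrightarrow> finite (resolving_set V E x y)"
  by (simp add: resolving_set_def)

lemma fan_landmark_weight_ge_1:
  assumes "a \<in> resolving_set (fan_V n) (fan_E n) x y" "b \<in> resolving_set (fan_V n) (fan_E n) x y"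
    and "a \<noteq> b" "a \<in> fan_landmarks n" "b \<in> fan_landmarks n"
  shows "1 \<le> sum (fan_landmark_weight n) (resolving_set (fan_V n) (fan_E n) x y)"
proof -
  have "sum (fan_landmark_weight n) {a, b} \<le> sum (fan_landmark_weight n) (resolving_set (fan_V n) (fan_E n) x y)"
    using assms by (intro sum_mono2) (auto simp: fan_V_def finite_resolving_set fan_landmark_weight_def)
  then show ?thesis using assms by (simp add: fan_landmark_weight_def)
qed

lemma fan_landmarks_resolve_hub:
  assumes "6 \<le> n" "x < n"
  shows "1 \<le> sum (fan_landmark_weight n) (resolving_set (fan_V n) (fan_E n) x n)"
proof -
  consider "x = 1" | "x = 3" | "x \<noteq> 1" "x \<noteq> 3" by blast
  then show ?thesis
  proof cases
    case 1
    then show ?thesis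
      by (intro fan_landmark_weight_ge_1[of 4 _ _ _ "n - 1"])
        (use assms in \<open>auto simp: resolving_set_fan fan_dist_def fan_E_def fan_landmarks_def\<close>)
  next
    case 2
    then show ?thesis
      by (intro fan_landmark_weight_ge_1[of 0 _ _ _ "n - 1"])
        (use assms in \<open>auto simp: resolving_set_fan fan_dist_def fan_E_def fan_landmarks_def\<close>)
  next
    case 3
    then show ?thesis
      by (intro fan_landmark_weight_ge_1[of 0 _ _ _ 2])
        (use assms in \<open>auto simp: resolving_set_fan fan_dist_def fan_E_def fan_landmarks_def\<close>)
  qed
qed

lemma fan_landmarks_resolve_path:
  assumes "6 \<le> n" "x < y" "y < n"
  shows "1 \<le> sum (fan_landmark_weight n) (resolving_set (fan_V n) (fan_E n) x y)"
proof (cases "x \<in> fan_landmarks n")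
  case x: True
  show ?thesis
  proof (cases "y \<in> fan_landmarks n")
    case True
    then show ?thesis
      by (intro fan_landmark_weight_ge_1[of x _ _ _ y])
        (use assms x in \<open>auto simp: resolving_set_fan fan_dist_def fan_E_def\<close>)
  next
    case False
    then show ?thesis
      by (intro fan_landmark_weight_ge_1[of x _ _ _ "y + 1"])
        (use assms x in \<open>auto simp: resolving_set_fan fan_dist_def fan_E_def fan_landmarks_def\<close>)
  qed
next
  case x: False
  then have "odd x" "x \<noteq> n - 1" using assms by (auto simp: fan_landmarks_def)
  then have "x - 1 \<in> fan_landmarks n" "x + 1 \<in> fan_landmarks n"
    using assms by (auto simp: fan_landmarks_def)
  consider "y \<noteq> x + 2" | "y = x + 2" "y = n - 1" | "y = x + 2" "y \<noteq> n - 1" by blast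
  then show ?thesis
  proof cases
    case 1
    then show ?thesis
      by (intro fan_landmark_weight_ge_1[of "x - 1" _ _ _ "x + 1"])
        (use assms \<open>odd x\<close> in \<open>auto simp: resolving_set_fan fan_dist_def fan_E_def fan_landmarks_def\<close>)
  next
    case 2
    then show ?thesis
      by (intro fan_landmark_weight_ge_1[of "x - 1" _ _ _ y])
        (use assms \<open>odd x\<close> in \<open>auto simp: resolving_set_fan fan_dist_def fan_E_def fan_landmarks_def\<close>)
  next
    case 3
    then show ?thesis
      by (intro fan_landmark_weight_ge_1[of "x - 1" _ _ _ "x + 3"])
        (use assms \<open>odd x\<close> in \<open>auto simp: resolving_set_fan fan_dist_def fan_E_def fan_landmarks_def\<close>)
  qed
qed

lemma resolving_function_fan_landmark_weight:
  assumes "6 \<le> n"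
  shows "resolving_function (fan_V n) (fan_E n) (fan_landmark_weight n)"
  unfolding resolving_function_def
proof (intro conjI ballI impI)
  fix v show "0 \<le> fan_landmark_weight n v" "fan_landmark_weight n v \<le> 1"
    by (auto simp: fan_landmark_weight_def)
next
  have resolves: "1 \<le> sum (fan_landmark_weight n) (resolving_set (fan_V n) (fan_E n) x y)"
    if "x < y" "y \<le> n" for x y
    using that assms fan_landmarks_resolve_hub fan_landmarks_resolve_path
    by (cases "y = n") auto
  fix x y assume "x \<in> fan_V n" "y \<in> fan_V n" "x \<noteq> y"
  then show "1 \<le> sum (fan_landmark_weight n) (resolving_set (fan_V n) (fan_E n) x y)"
    using resolves[of x y] resolves[of y x] resolving_set_commute[of "fan_V n" "fan_E n" y x]
    by (cases "x < y") (auto simp: fan_V_def)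
qed

lemma card_fan_landmarks:
  "card (fan_landmarks n) = (n + 1) div 2 + (if even n then 1 else 0)"
proof -
  have evens: "{v. v < n \<and> even v} = (*) 2 ` {..<(n + 1) div 2}"
    by (auto simp: image_iff elim!: evenE)
  have "card {v. v < n \<and> even v} = (n + 1) div 2"
    unfolding evens by (simp add: card_image inj_on_def)
  moreover have "n - 1 \<in> {v. v < n \<and> even v} \<longleftrightarrow> odd n"
    by auto presburger+
  ultimately show ?thesis
    by (auto simp: fan_landmarks_def card_insert_if)
qed

lemma sum_fan_landmark_weight:
  "sum (fan_landmark_weight n) (fan_V n) = (if even n then (real n + 2) / 4 else (real n + 1) / 4)"
proof -
  have "fan_landmarks n \<subseteq> fan_V n" by (auto simp: fan_landmarks_def fan_V_def)
  then have "sum (fan_landmark_weight n) (fan_V n) = real (card (fan_landmarks n)) / 2"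
    by (simp add: fan_landmark_weight_def sum.If_cases fan_V_def Int_absorb1)
  also have "\<dots> = (if even n then (real n + 2) / 4 else (real n + 1) / 4)"
    by (auto simp: card_fan_landmarks elim!: evenE oddE)
  finally show ?thesis .
qed

lemma frac_dim_fan_1: "frac_dim (fan_V 1) (fan_E 1) = 1"
proof -
  have V: "fan_V 1 = {0, 1}" by (auto simp: fan_V_def)
  show ?thesis
  proof (rule frac_dim_eqI[where g="\<lambda>v. if v = 0 then 1 else 0"])
    show "resolving_function (fan_V 1) (fan_E 1) (\<lambda>v. if v = 0 then 1 else 0)"
      unfolding resolving_function_fan_iff unfolding V by (simp add: fan_dist_def fan_E_def)
  next
    fix g assume g: "resolving_function (fan_V 1) (fan_E 1) g"
    from resolving_function_fan_pair[OF g, of 0 1]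
    show "1 \<le> sum g (fan_V 1)" unfolding V by (simp add: fan_dist_def fan_E_def)
  qed (unfold V, simp)
qed

lemma frac_dim_fan_2: "frac_dim (fan_V 2) (fan_E 2) = 3 / 2"
proof -
  have V: "fan_V 2 = {0, 1, 2}" by (auto simp: fan_V_def)
  show ?thesis
  proof (rule frac_dim_eqI[where g="\<lambda>_. 1 / 2"])
    show "resolving_function (fan_V 2) (fan_E 2) (\<lambda>_. 1 / 2)"
      unfolding resolving_function_fan_iff unfolding V by (simp add: fan_dist_def fan_E_def)
  next
    fix g assume g: "resolving_function (fan_V 2) (fan_E 2) g"
    from resolving_function_fan_pair[OF g, of 0 1] resolving_function_fan_pair[OF g, of 0 2]
      resolving_function_fan_pair[OF g, of 1 2]
    show "3 / 2 \<le> sum g (fan_V 2)" by (simp add: V fan_dist_def fan_E_def)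
  qed (simp add: V)
qed

lemma frac_dim_fan_3: "frac_dim (fan_V 3) (fan_E 3) = 2"
proof -
  have V: "fan_V 3 = {0, 1, 2, 3}" by (auto simp: fan_V_def)
  show ?thesis
  proof (rule frac_dim_eqI[where g="\<lambda>v. if v < 2 then 1 else 0"])
    show "resolving_function (fan_V 3) (fan_E 3) (\<lambda>v. if v < 2 then 1 else 0)"
      unfolding resolving_function_fan_iff unfolding V by (simp add: fan_dist_def fan_E_def)
  next
    fix g assume g: "resolving_function (fan_V 3) (fan_E 3) g"
    from resolving_function_fan_pair[OF g, of 0 2] resolving_function_fan_pair[OF g, of 1 3]
    show "2 \<le> sum g (fan_V 3)" by (simp add: V fan_dist_def fan_E_def)
  qed (simp add: V)
qed

lemma frac_dim_fan_4: "frac_dim (fan_V 4) (fan_E 4) = 5 / 3"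
proof -
  have V: "fan_V 4 = {0, 1, 2, 3, 4}" by (auto simp: fan_V_def)
  show ?thesis
  proof (rule frac_dim_eqI[where g="\<lambda>_. 1 / 3"])
    show "resolving_function (fan_V 4) (fan_E 4) (\<lambda>_. 1 / 3)"
      unfolding resolving_function_fan_iff unfolding V by (simp add: fan_dist_def fan_E_def)
  next
    fix g assume g: "resolving_function (fan_V 4) (fan_E 4) g"
    from resolving_function_fan_pair[OF g, of 0 1] resolving_function_fan_pair[OF g, of 0 2]
      resolving_function_fan_pair[OF g, of 1 4] resolving_function_fan_pair[OF g, of 2 4]
    show "5 / 3 \<le> sum g (fan_V 4)" by (simp add: V fan_dist_def fan_E_def)
  qed (simp add: V)
qed

lemma frac_dim_fan_5: "frac_dim (fan_V 5) (fan_E 5) = 5 / 3"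
proof -
  have V: "fan_V 5 = {0, 1, 2, 3, 4, 5}" by (auto simp: fan_V_def)
  show ?thesis
  proof (rule frac_dim_eqI[where g="\<lambda>v. if v < 5 then 1 / 3 else 0"])
    show "resolving_function (fan_V 5) (fan_E 5) (\<lambda>v. if v < 5 then 1 / 3 else 0)"
      unfolding resolving_function_fan_iff unfolding V by (simp add: fan_dist_def fan_E_def)
  next
    fix g assume g: "resolving_function (fan_V 5) (fan_E 5) g"
    from resolving_function_fan_pair[OF g, of 0 1] resolving_function_fan_pair[OF g, of 0 2]
      resolving_function_fan_pair[OF g, of 1 5] resolving_function_fan_pair[OF g, of 2 5]
    show "5 / 3 \<le> sum g (fan_V 5)" by (simp add: V fan_dist_def fan_E_def)
  qed (simp add: V)
qed

lemma frac_dim_fan_odd: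
  assumes "6 \<le> n" "odd n"
  shows "frac_dim (fan_V n) (fan_E n) = (real n + 1) / 4"
proof (rule frac_dim_eqI[OF resolving_function_fan_landmark_weight[OF assms(1)]])
  show "sum (fan_landmark_weight n) (fan_V n) = (real n + 1) / 4"
    using assms(2) by (simp add: sum_fan_landmark_weight)
  fix g assume g: "resolving_function (fan_V n) (fan_E n) g"
  have "n mod 4 = 1 \<or> n mod 4 = 3" using assms(2) by presburger
  then show "(real n + 1) / 4 \<le> sum g (fan_V n)"
    using fan_weight_ge_mod4_eq_1[OF g] fan_weight_ge_mod4_eq_3[OF g] assms(1) by auto
qed

lemma frac_dim_fan_mod4_eq_2:
  assumes "6 \<le> n" "n mod 4 = 2"
  shows "frac_dim (fan_V n) (fan_E n) = (real n + 2) / 4"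
proof (rule frac_dim_eqI[OF resolving_function_fan_landmark_weight[OF assms(1)]])
  show "sum (fan_landmark_weight n) (fan_V n) = (real n + 2) / 4"
  proof -
    have "even n" using assms(2) by presburger
    then show ?thesis by (simp add: sum_fan_landmark_weight)
  qed
  show "(real n + 2) / 4 \<le> sum g (fan_V n)" if "resolving_function (fan_V n) (fan_E n) g" for g
    using fan_weight_ge_mod4_eq_2[OF that assms(2,1)] .
qed

lemma frac_dim_fan_mod4_eq_0:
  assumes "8 \<le> n" "n mod 4 = 0"
  shows "real n / 4 \<le> frac_dim (fan_V n) (fan_E n)" "frac_dim (fan_V n) (fan_E n) \<le> (real n + 2) / 4"
proof -
  have landmarks: "resolving_function (fan_V n) (fan_E n) (fan_landmark_weight n)"
    using assms(1) by (intro resolving_function_fan_landmark_weight) simp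
  show "real n / 4 \<le> frac_dim (fan_V n) (fan_E n)"
    using fan_weight_ge_mod4_eq_0 assms by (intro le_frac_dim[OF landmarks]) auto
  have "even n" using assms(2) by presburger
  then show "frac_dim (fan_V n) (fan_E n) \<le> (real n + 2) / 4"
    using frac_dim_le[OF landmarks] by (simp add: sum_fan_landmark_weight)
qed

theorem theorem3p3:
  fixes k :: nat
  assumes "k \<ge> 1"
  shows "(\<forall>n \<ge> 1. trunc_frac_dim k (fan_V n) (fan_E n) = frac_dim (fan_V n) (fan_E n))
    \<and> (\<forall>n. n \<in> {1, 2, 3} \<longrightarrow> frac_dim (fan_V n) (fan_E n) = (real n + 1) / 2)
    \<and> (\<forall>n. n \<in> {4, 5} \<longrightarrow> frac_dim (fan_V n) (fan_E n) = 5 / 3)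
    \<and> (\<forall>n. n \<ge> 6 \<and> (n mod 4 = 1 \<or> n mod 4 = 3) \<longrightarrow> frac_dim (fan_V n) (fan_E n) = (real n + 1) / 4)
    \<and> (\<forall>n. n \<ge> 6 \<and> n mod 4 = 2 \<longrightarrow> frac_dim (fan_V n) (fan_E n) = (real n + 2) / 4)
    \<and> (\<forall>n. n \<ge> 8 \<and> n mod 4 = 0 \<longrightarrow>
          real n / 4 \<le> trunc_frac_dim k (fan_V n) (fan_E n)
        \<and> trunc_frac_dim k (fan_V n) (fan_E n) = frac_dim (fan_V n) (fan_E n)
        \<and> frac_dim (fan_V n) (fan_E n) \<le> (real n + 2) / 4)"
proof (intro conjI allI impI)
  fix n :: nat
  show "trunc_frac_dim k (fan_V n) (fan_E n) = frac_dim (fan_V n) (fan_E n)"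
    by (rule trunc_frac_dim_fan[OF assms])
next
  fix n :: nat assume "n \<in> {1, 2, 3}"
  then show "frac_dim (fan_V n) (fan_E n) = (real n + 1) / 2"
    using frac_dim_fan_1 frac_dim_fan_2 frac_dim_fan_3 by auto
next
  fix n :: nat assume "n \<in> {4, 5}"
  then show "frac_dim (fan_V n) (fan_E n) = 5 / 3"
    using frac_dim_fan_4 frac_dim_fan_5 by auto
next
  fix n :: nat assume "6 \<le> n \<and> (n mod 4 = 1 \<or> n mod 4 = 3)"
  then show "frac_dim (fan_V n) (fan_E n) = (real n + 1) / 4"
    by (intro frac_dim_fan_odd) presburger+
next
  fix n :: nat assume "6 \<le> n \<and> n mod 4 = 2"
  then show "frac_dim (fan_V n) (fan_E n) = (real n + 2) / 4"
    using frac_dim_fan_mod4_eq_2 by blast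
next
  fix n :: nat assume "8 \<le> n \<and> n mod 4 = 0"
  then show "real n / 4 \<le> trunc_frac_dim k (fan_V n) (fan_E n)"
    and "trunc_frac_dim k (fan_V n) (fan_E n) = frac_dim (fan_V n) (fan_E n)"
    and "frac_dim (fan_V n) (fan_E n) \<le> (real n + 2) / 4"
    using frac_dim_fan_mod4_eq_0 trunc_frac_dim_fan[OF assms] by auto
qed

end
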